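(* Let $k\geq 2$ and $n\geq 1$ be integers and let $G\in\mathcal{G}_{k,n}$. Then $G$ contains $H_k$ as a subgraph (i.e., there is an injective map $\sigma:V(H_k)\to V(G)$ sending every edge of $H_k$ to an edge of $G$) if and only if there exist $i_{\mathrm{top}},i_{\mathrm{bot}}\in[n]$ such that both $\{f_{\mathrm{top},a,i_{\mathrm{top}}},\,f_{\mathrm{bot},a,i_{\mathrm{bot}}}\}\in E(G)$ and $\{f_{\mathrm{top},b,i_{\mathrm{top}}},\,f_{\mathrm{bot},b,i_{\mathrm{bot}}}\}\in E(G)$.
   Context: Sides $S\in\{\mathrm{top},\mathrm{bot}\}$, orientations $X\in\{a,b,\mathrm{mid}\}$. Define $c(\mathrm{top},a)=6$, $c(\mathrm{top},b)=7$, $c(\mathrm{bot},a)=8$, $c(\mathrm{bot},b)=9$, and $c(S,\mathrm{mid})=10$ for both $S$. The graph $H_k$: vertices are (i) four endpoints $e_{S,P}$ for $S\in\{\mathrm{top},\mathrm{bot}\}$, $P\in\{a,b\}$; (ii) for each $s\in\{6,\dots,10\}$ a set $K_s$ of $s$ vertices forming an $s$-clique, with a distinguished vertex $\kappa_s\in K_s$; (iii) triangle vertices $t_{S,i,X}$ for $S\in\{\mathrm{top},\mathrm{bot}\}$, $i\in[k]$, $X\in\{a,b,\mathrm{mid}\}$. Edges: all edges inside each $K_s$; for each $S,i$ the three vertices $t_{S,i,a},t_{S,i,b},t_{S,i,\mathrm{mid}}$ form a triangle; $\{e_{\mathrm{top},P},e_{\mathrm{bot},P}\}$ for each $P\in\{a,b\}$;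 $\{e_{S,P},\kappa_{c(S,P)}\}$ for all $S,P$; $\{t_{S,i,X},\kappa_{c(S,X)}\}$ for all $S,i,X$; $\{\kappa_s,\kappa_{s'}\}$ for all distinct $s,s'\in\{6,\dots,10\}$; and $\{e_{S,P},t_{S,i,P}\}$ for all $S$, $P\in\{a,b\}$, $i\in[k]$. No other edges. The family $\mathcal{G}_{k,n}$: let $m=k\lceil n^{1/k}\rceil$ and fix an ordering $Q_1,\dots,Q_N$ of the $k$-element subsets of $[m]$ (note $N=\binom{m}{k}\ge n$). A graph $G$ is in $\mathcal{G}_{k,n}$ if its vertices are: endpoint copies $f_{S,P,i}$ for $S\in\{\mathrm{top},\mathrm{bot}\}$, $P\in\{a,b\}$, $i\in[n]$; triangle vertices $u_{S,j,X}$ for $S\in\{\mathrm{top},\mathrm{bot}\}$, $j\in[m]$, $X\in\{a,b,\mathrm{mid}\}$; and for each $s\in\{6,\dots,10\}$ a set $K'_s$ of $s$ vertices with a distinguished vertex $\kappa'_s\in K'_s$; and its edges are exactly: all edges inside each $K'_s$; for each $S,j$ the triangle on $u_{S,j,a},u_{S,j,b},u_{S,j,\mathrm{mid}}$; $\{f_{S,P,i},\kappa'_{c(S,P)}\}$ for all $S,P,i$; $\{u_{S,j,X},\kappa'_{c(S,X)}\}$ for all $S,j,X$; $\{\kappa'_s,\kappa'_{s'}\}$ for all distinct $s,s'$; $\{f_{S,P,i},u_{S,j,P}\}$ for all $S$, $P\in\{a,b\}$, $i\in[n]$ and $j\in Q_i$; and, for each $P\in\{a,b\}$, an arbitrary subset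 of the pairs $\{f_{\mathrm{top},P,i},f_{\mathrm{bot},P,i'}\}$, $i,i'\in[n]$. *)

theory Defs
  imports Complex_Main
begin

datatype side = Top | Bot
datatype orient = OA | OB | OMid
datatype endp = PA | PB

fun endp_orient :: "endp \<Rightarrow> orient" where
  "endp_orient PA = OA" | "endp_orient PB = OB"

fun cidx :: "side \<Rightarrow> orient \<Rightarrow> nat" where
  "cidx Top OA = 6" | "cidx Top OB = 7" | "cidx Bot OA = 8" | "cidx Bot OB = 9"
| "cidx _ OMid = 10"

definition contains_subgraph :: "('a set \<times> 'a set set) \<Rightarrow> ('b set \<times> 'b set set) \<Rightarrow> bool" where
  "contains_subgraph G H \<longleftrightarrow>
     (\<exists>\<sigma>. inj_on \<sigma> (fst H) \<and> \<sigma> ` fst H \<subseteq> fst G \<and>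
          (\<forall>x y. {x, y} \<in> snd H \<longrightarrow> {\<sigma> x, \<sigma> y} \<in> snd G))"

text \<open>HE S P = e_{S,P}; HK s x = x-th vertex of K_s (x < s), with kappa_s = HK s 0;
  HT S i X = t_{S,i,X}.\<close>
datatype hvert = HE side endp | HK nat nat | HT side nat orient

abbreviation hkappa :: "nat \<Rightarrow> hvert" where "hkappa s \<equiv> HK s 0"

definition Hverts :: "nat \<Rightarrow> hvert set" where
  "Hverts k = range (\<lambda>(S, P). HE S P)
     \<union> {HK s x | s x. s \<in> {6..10} \<and> x < s}
     \<union> {HT S i X | S i X. i \<in> {1..k}}"

definition Hedges :: "nat \<Rightarrow> hvert set set" where
  "Hedges k =
      {{HK s x, HK s y} | s x y. s \<in> {6..10} \<and> x < s \<and> y < s \<and> x \<noteq> y}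
    \<union> {{HT S i X, HT S i Y} | S i X Y. i \<in> {1..k} \<and> X \<noteq> Y}
    \<union> {{HE Top P, HE Bot P} | P. True}
    \<union> {{HE S P, hkappa (cidx S (endp_orient P))} | S P. True}
    \<union> {{HT S i X, hkappa (cidx S X)} | S i X. i \<in> {1..k}}
    \<union> {{hkappa s, hkappa s'} | s s'. s \<in> {6..10} \<and> s' \<in> {6..10} \<and> s \<noteq> s'}
    \<union> {{HE S P, HT S i (endp_orient P)} | S P i. i \<in> {1..k}}"

definition H_graph :: "nat \<Rightarrow> hvert set \<times> hvert set set" where
  "H_graph k = (Hverts k, Hedges k)"

text \<open>GF S P i = f_{S,P,i}; GU S j X = u_{S,j,X}; GK s x = x-th vertex of K'_s,
  with kappa'_s = GK s 0.\<close>
datatype gvert = GF side endp nat | GU side nat orient | GK nat nat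

abbreviation gkappa :: "nat \<Rightarrow> gvert" where "gkappa s \<equiv> GK s 0"

definition mpar :: "nat \<Rightarrow> nat \<Rightarrow> nat" where
  "mpar k n = k * nat \<lceil>root k (real n)\<rceil>"

definition is_ordering :: "nat \<Rightarrow> nat \<Rightarrow> (nat \<Rightarrow> nat set) \<Rightarrow> bool" where
  "is_ordering k n Q \<longleftrightarrow>
     bij_betw Q {1 .. mpar k n choose k} {S. S \<subseteq> {1 .. mpar k n} \<and> card S = k}"

definition Gverts :: "nat \<Rightarrow> nat \<Rightarrow> gvert set" where
  "Gverts k n = {GF S P i | S P i. i \<in> {1..n}}
     \<union> {GU S j X | S j X. j \<in> {1 .. mpar k n}}
     \<union> {GK s x | s x. s \<in> {6..10} \<and> x < s}"

definition Gedges :: "nat \<Rightarrow> nat \<Rightarrow> (nat \<Rightarrow> nat set) \<Rightarrow> (endp \<Rightarrow> (nat \<times> nat) set) \<Rightarrow> gvert set set" where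
  "Gedges k n Q R =
      {{GK s x, GK s y} | s x y. s \<in> {6..10} \<and> x < s \<and> y < s \<and> x \<noteq> y}
    \<union> {{GU S j X, GU S j Y} | S j X Y. j \<in> {1 .. mpar k n} \<and> X \<noteq> Y}
    \<union> {{GF S P i, gkappa (cidx S (endp_orient P))} | S P i. i \<in> {1..n}}
    \<union> {{GU S j X, gkappa (cidx S X)} | S j X. j \<in> {1 .. mpar k n}}
    \<union> {{gkappa s, gkappa s'} | s s'. s \<in> {6..10} \<and> s' \<in> {6..10} \<and> s \<noteq> s'}
    \<union> {{GF S P i, GU S j (endp_orient P)} | S P i j. i \<in> {1..n} \<and> j \<in> Q i}
    \<union> {{GF Top P i, GF Bot P i'} | P i i'. (i, i') \<in> R P}"

definition Gfam :: "nat \<Rightarrow> nat \<Rightarrow> (gvert set \<times> gvert set set) set" where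
  "Gfam k n = {(Gverts k n, Gedges k n Q R) | Q R.
      is_ordering k n Q \<and> (\<forall>P. R P \<subseteq> {1..n} \<times> {1..n})}"

end

theory Submission
  imports Defs
begin

text \<open>
  A clique on four vertices of G lies inside one of the cliques K'_s, and two such cliques meet
  only through their centres kappa'_s. An embedding of H_k therefore maps every K_s into a single
  K'_t with s \<le> t, injectively in s; as the sizes 6, ..., 10 are distinct, K_s goes onto K'_s and
  kappa_s to kappa'_s. The endpoint e_{S,P} is then sent to a neighbour of kappa'_{c(S,P)}, which
  must be an endpoint copy f_{S,P,i}, and the k triangles on side S are sent to triangles
  u_{S,j} with j in both Q_i for the two endpoints of side S. Since these k indices are distinct
  and |Q_i| = k, both endpoints on side S use the same index i_S, and the edges
  e_{top,P} e_{bot,P} yield the edges between f_{top,P,i_top} and f_{bot,P,i_bot}. Conversely,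
  such indices give an embedding: e_{S,P} goes to f_{S,P,i_S} and the triangles on side S go
  bijectively to the triangles indexed by Q_{i_S}.
\<close>

fun g_adj :: "nat \<Rightarrow> nat \<Rightarrow> (nat \<Rightarrow> nat set) \<Rightarrow> (endp \<Rightarrow> (nat \<times> nat) set) \<Rightarrow> gvert \<Rightarrow> gvert \<Rightarrow> bool" where
  "g_adj m n Q R (GK s x) (GK s' y) =
     ((s = s' \<and> s \<in> {6..10} \<and> x < s \<and> y < s \<and> x \<noteq> y) \<or> (x = 0 \<and> y = 0 \<and> s \<in> {6..10} \<and> s' \<in> {6..10} \<and> s \<noteq> s'))"
| "g_adj m n Q R (GU S j X) (GU S' j' Y) = (S = S' \<and> j = j' \<and> j \<in> {1..m} \<and> X \<noteq> Y)"
| "g_adj m n Q R (GF S P i) (GK s x) = (x = 0 \<and> s = cidx S (endp_orient P) \<and> i \<in> {1..n})"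
| "g_adj m n Q R (GK s x) (GF S P i) = (x = 0 \<and> s = cidx S (endp_orient P) \<and> i \<in> {1..n})"
| "g_adj m n Q R (GU S j X) (GK s x) = (x = 0 \<and> s = cidx S X \<and> j \<in> {1..m})"
| "g_adj m n Q R (GK s x) (GU S j X) = (x = 0 \<and> s = cidx S X \<and> j \<in> {1..m})"
| "g_adj m n Q R (GF S P i) (GU S' j X) = (S = S' \<and> X = endp_orient P \<and> i \<in> {1..n} \<and> j \<in> Q i)"
| "g_adj m n Q R (GU S' j X) (GF S P i) = (S = S' \<and> X = endp_orient P \<and> i \<in> {1..n} \<and> j \<in> Q i)"
| "g_adj m n Q R (GF S P i) (GF S' P' i') =
     (P = P' \<and> ((S = Top \<and> S' = Bot \<and> (i, i') \<in> R P) \<or> (S = Bot \<and> S' = Top \<and> (i', i) \<in> R P)))"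

fun h_adj :: "nat \<Rightarrow> hvert \<Rightarrow> hvert \<Rightarrow> bool" where
  "h_adj k (HK s x) (HK s' y) =
     ((s = s' \<and> s \<in> {6..10} \<and> x < s \<and> y < s \<and> x \<noteq> y) \<or> (x = 0 \<and> y = 0 \<and> s \<in> {6..10} \<and> s' \<in> {6..10} \<and> s \<noteq> s'))"
| "h_adj k (HT S i X) (HT S' i' Y) = (S = S' \<and> i = i' \<and> i \<in> {1..k} \<and> X \<noteq> Y)"
| "h_adj k (HE S P) (HE S' P') = (P = P' \<and> S \<noteq> S')"
| "h_adj k (HE S P) (HK s x) = (x = 0 \<and> s = cidx S (endp_orient P))"
| "h_adj k (HK s x) (HE S P) = (x = 0 \<and> s = cidx S (endp_orient P))"
| "h_adj k (HT S i X) (HK s x) = (x = 0 \<and> s = cidx S X \<and> i \<in> {1..k})"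
| "h_adj k (HK s x) (HT S i X) = (x = 0 \<and> s = cidx S X \<and> i \<in> {1..k})"
| "h_adj k (HE S P) (HT S' i X) = (S = S' \<and> X = endp_orient P \<and> i \<in> {1..k})"
| "h_adj k (HT S' i X) (HE S P) = (S = S' \<and> X = endp_orient P \<and> i \<in> {1..k})"

fun g_vert :: "nat \<Rightarrow> nat \<Rightarrow> gvert \<Rightarrow> bool" where
  "g_vert m n (GF S P i) = (i \<in> {1..n})"
| "g_vert m n (GU S j X) = (j \<in> {1..m})"
| "g_vert m n (GK s x) = (s \<in> {6..10} \<and> x < s)"

fun h_vert :: "nat \<Rightarrow> hvert \<Rightarrow> bool" where
  "h_vert k (HE S P) = True"
| "h_vert k (HK s x) = (s \<in> {6..10} \<and> x < s)"
| "h_vert k (HT S i X) = (i \<in> {1..k})"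

lemma cidx_range: "cidx S X \<in> {6..10}"
  by (cases S; cases X) auto

lemma cidx_eq_iff: "cidx S X = cidx S' Y \<longleftrightarrow> X = Y \<and> (S = S' \<or> X = OMid)"
  by (cases S; cases X; cases S'; cases Y) auto

lemma endp_orient_neq_OMid [simp]: "endp_orient P \<noteq> OMid"
  by (cases P) auto

lemma endp_orient_eq_iff [simp]: "endp_orient P = endp_orient P' \<longleftrightarrow> P = P'"
  by (cases P; cases P') auto

lemma Gverts_eq: "Gverts k n = Collect (g_vert (mpar k n) n)"
  by (auto simp: Gverts_def elim!: g_vert.elims)

lemma Hverts_eq: "Hverts k = Collect (h_vert k)"
  by (auto simp: Hverts_def elim!: h_vert.elims)

lemma Gedges_iff_g_adj: "{v, w} \<in> Gedges k n Q R \<longleftrightarrow> g_adj (mpar k n) n Q R v w"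
  by (cases v; cases w) (auto simp: Gedges_def doubleton_eq_iff cidx_range)

lemma Hedges_iff_h_adj: "{v, w} \<in> Hedges k \<longleftrightarrow> h_adj k v w"
  by (cases v; cases w) (auto simp: Hedges_def doubleton_eq_iff cidx_range, metis side.exhaust)

lemma n_le_mpar_choose:
  assumes k: "k \<ge> 1" and n: "n \<ge> 1"
  shows "n \<le> mpar k n choose k"
proof -
  define r where "r = root k (real n)"
  define c where "c = nat \<lceil>r\<rceil>"
  have r0: "r \<ge> 0" and rk: "r ^ k = real n"
    unfolding r_def using k by (simp_all add: real_root_pow_pos2)
  have rc: "r \<le> real c"
    unfolding c_def by linarith
  have c1: "c \<ge> 1"
    using rc r0 rk n k by (cases "c = 0") (auto simp: power_0_left)
  have "real n \<le> real c ^ k"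
    using power_mono[OF rc r0, of k] rk by linarith
  also have "\<dots> = (real (k * c) / real k) ^ k"
    using k by simp
  also have "\<dots> \<le> real (k * c choose k)"
    by (rule binomial_ge_n_over_k_pow_k) (use c1 in simp)
  finally show ?thesis
    unfolding mpar_def c_def r_def by simp
qed

lemma is_ordering_subset_card:
  assumes "is_ordering k n Q" "k \<ge> 1" "n \<ge> 1" "i \<in> {1..n}"
  shows "Q i \<subseteq> {1..mpar k n} \<and> card (Q i) = k"
  using bij_betw_apply[OF assms(1)[unfolded is_ordering_def], of i] n_le_mpar_choose[OF assms(2,3)] assms(4)
  by auto

lemma is_ordering_inj_on:
  assumes "is_ordering k n Q" "k \<ge> 1" "n \<ge> 1"
  shows "inj_on Q {1..n}"
  using bij_betw_imp_inj_on[OF assms(1)[unfolded is_ordering_def]] n_le_mpar_choose[OF assms(2,3)]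
  by (auto elim!: inj_on_subset)

lemma inj_on_inflationary_eq_self:
  fixes f :: "'a \<Rightarrow> 'a::ordered_cancel_comm_monoid_add"
  assumes "finite A" "inj_on f A" "f ` A \<subseteq> A" "\<And>x. x \<in> A \<Longrightarrow> x \<le> f x" "x \<in> A"
  shows "f x = x"
proof (rule ccontr)
  assume "f x \<noteq> x"
  with assms(4,5) have "sum id A < sum f A"
    by (intro sum_strict_mono_ex1) (auto simp: assms(1) order_less_le intro!: bexI[of _ x])
  moreover have "sum f A = sum id A"
    using sum.reindex[OF assms(2), of id] endo_inj_surj[OF assms(1,3,2)] by simp
  ultimately show False
    by simp
qed

lemma g_adj_K4_member_is_GK:
  assumes "g_adj m n Q R v a" "g_adj m n Q R v b" "g_adj m n Q R v c"
    "g_adj m n Q R a b" "g_adj m n Q R a c" "g_adj m n Q R b c"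
  shows "\<exists>s x. v = GK s x"
  using assms
  by (cases v; cases a; cases b; cases c) (auto simp: cidx_eq_iff, metis orient.exhaust)

text \<open>Two vertices in different blocks K'_s are both centres kappa'_s, hence so is every other
  vertex of the clique; but there are only five centres.\<close>

lemma g_adj_clique_in_one_block:
  assumes inj: "inj_on f A" and A: "finite A" "card A \<ge> 6"
    and block: "\<And>a. a \<in> A \<Longrightarrow> \<exists>s x. f a = GK s x \<and> s \<in> {6..10}"
    and clique: "\<And>a b. a \<in> A \<Longrightarrow> b \<in> A \<Longrightarrow> a \<noteq> b \<Longrightarrow> g_adj m n Q R (f a) (f b)"
  shows "\<exists>t. \<forall>a\<in>A. \<exists>x. f a = GK t x"
proof (rule ccontr)
  assume no_block: "\<not> ?thesis"
  from A obtain a where a: "a \<in> A"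
    by fastforce
  then obtain sa xa where fa: "f a = GK sa xa"
    using block by blast
  then obtain b sb xb where b: "b \<in> A" "f b = GK sb xb" "sb \<noteq> sa"
    using no_block block by metis
  have "f c \<in> gkappa ` {6..10}" if c: "c \<in> A" for c
  proof -
    obtain sc xc where fc: "f c = GK sc xc" "sc \<in> {6..10}"
      using block[OF c] by blast
    have "xc = 0"
    proof (cases "sc = sa")
      case True
      then have "c \<noteq> b"
        using fc b by auto
      then show ?thesis
        using clique[OF c b(1)] fc b True by auto
    next
      case False
      then have "c \<noteq> a"
        using fc fa by auto
      then show ?thesis
        using clique[OF c a] fc fa False by auto
    qed
    then show ?thesis
      using fc by auto
  qed
  then have "card A \<le> card (gkappa ` {6..10::nat})"
    by (intro card_inj_on_le[OF inj]) auto
  also have "\<dots> \<le> 5"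
    using card_image_le[of "{6..10::nat}" gkappa] by simp
  finally show False
    using A by simp
qed

abbreviation hclique :: "nat \<Rightarrow> hvert set" where
  "hclique s \<equiv> HK s ` {..<s}"

abbreviation gclique :: "nat \<Rightarrow> gvert set" where
  "gclique s \<equiv> GK s ` {..<s}"

lemma card_gclique: "card (gclique t) = t"
  using card_image[of "GK t" "{..<t}"] by (simp add: inj_on_def)

locale H_embedding =
  fixes k m n :: nat and Q :: "nat \<Rightarrow> nat set" and R :: "endp \<Rightarrow> (nat \<times> nat) set"
    and \<sigma> :: "hvert \<Rightarrow> gvert"
  assumes inj: "inj_on \<sigma> (Collect (h_vert k))"
    and vert: "\<And>v. h_vert k v \<Longrightarrow> g_vert m n (\<sigma> v)"
    and adj: "\<And>v w. h_adj k v w \<Longrightarrow> g_adj m n Q R (\<sigma> v) (\<sigma> w)"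

lemma contains_H_graph_iff:
  "contains_subgraph (Gverts k n, Gedges k n Q R) (H_graph k) \<longleftrightarrow>
     (\<exists>\<sigma>. H_embedding k (mpar k n) n Q R \<sigma>)"
  unfolding contains_subgraph_def H_graph_def H_embedding_def
  by (simp add: Hverts_eq Gverts_eq Hedges_iff_h_adj Gedges_iff_g_adj image_subset_iff)

context H_embedding
begin

lemma clique_member_image_GK:
  assumes s: "s \<in> {6..10}" "x < s"
  shows "\<exists>t z. \<sigma> (HK s x) = GK t z \<and> t \<in> {6..10}"
proof -
  have "\<exists>a b c :: nat. a < 4 \<and> b < 4 \<and> c < 4 \<and> a \<noteq> b \<and> a \<noteq> c \<and> b \<noteq> c \<and> a \<noteq> x \<and> b \<noteq> x \<and> c \<noteq> x"
    by presburger
  then obtain a b c :: nat where abc: "a < 4" "b < 4" "c < 4" "a \<noteq> b" "a \<noteq> c" "b \<noteq> c" "a \<noteq> x" "b \<noteq> x" "c \<noteq> x"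
    by blast
  have "\<exists>t z. \<sigma> (HK s x) = GK t z"
    by (rule g_adj_K4_member_is_GK[of m n Q R _ "\<sigma> (HK s a)" "\<sigma> (HK s b)" "\<sigma> (HK s c)"])
      (rule adj; use s abc in auto)+
  then show ?thesis
    using vert[of "HK s x"] s by auto
qed

lemma clique_image_in_block:
  assumes s: "s \<in> {6..10}"
  shows "\<exists>t\<in>{6..10}. \<sigma> ` hclique s \<subseteq> gclique t"
proof -
  have "hclique s \<subseteq> Collect (h_vert k)"
    using s by auto
  then have inj_s: "inj_on (\<sigma> \<circ> HK s) {..<s}"
    by (intro comp_inj_on inj_on_subset[OF inj]) (auto intro: inj_onI)
  have "\<exists>t. \<forall>x\<in>{..<s}. \<exists>z. (\<sigma> \<circ> HK s) x = GK t z"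
  proof (rule g_adj_clique_in_one_block[OF inj_s])
    show "finite {..<s}" "card {..<s} \<ge> 6"
      using s by auto
    show "\<exists>t z. (\<sigma> \<circ> HK s) x = GK t z \<and> t \<in> {6..10}" if "x \<in> {..<s}" for x
      using clique_member_image_GK s that by auto
    show "g_adj m n Q R ((\<sigma> \<circ> HK s) x) ((\<sigma> \<circ> HK s) y)" if "x \<in> {..<s}" "y \<in> {..<s}" "x \<noteq> y" for x y
      using adj s that by auto
  qed
  then obtain t where t: "\<And>x. x < s \<Longrightarrow> \<exists>z. \<sigma> (HK s x) = GK t z"
    by auto
  have "t \<in> {6..10}"
    using t[of 0] vert[of "HK s 0"] s by auto
  moreover have "\<sigma> (HK s x) \<in> gclique t" if x: "x < s" for x
  proof -
    obtain z where z: "\<sigma> (HK s x) = GK t z"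
      using t[OF x] by blast
    then have "z < t"
      using vert[of "HK s x"] s x by auto
    with z show ?thesis
      by simp
  qed
  then have "\<sigma> ` hclique s \<subseteq> gclique t"
    by auto
  ultimately show ?thesis
    by blast
qed

definition clique_block :: "nat \<Rightarrow> nat" where
  "clique_block s = (SOME t. t \<in> {6..10} \<and> \<sigma> ` hclique s \<subseteq> gclique t)"

lemma clique_block:
  assumes "s \<in> {6..10}"
  shows "clique_block s \<in> {6..10}" "\<sigma> ` hclique s \<subseteq> gclique (clique_block s)"
  using someI_ex[OF clique_image_in_block[OF assms, unfolded Bex_def]]
  unfolding clique_block_def by blast+

lemma card_image_hclique:
  assumes "s \<in> {6..10}"
  shows "card (\<sigma> ` hclique s) = s"
proof -
  have "inj_on \<sigma> (hclique s)"
    by (rule inj_on_subset[OF inj]) (use assms in auto)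
  then show ?thesis
    using card_image[of "HK s" "{..<s}"] by (simp add: card_image inj_on_def)
qed

lemma clique_block_ge:
  assumes "s \<in> {6..10}"
  shows "s \<le> clique_block s"
  using card_mono[OF _ clique_block(2)[OF assms]] card_image_hclique[OF assms] card_gclique by simp

lemma inj_on_clique_block: "inj_on clique_block {6..10}"
proof (rule inj_onI)
  fix s s' assume s_s': "s \<in> {6..10}" "s' \<in> {6..10}" "clique_block s = clique_block s'"
  show "s = s'"
  proof (rule ccontr)
    assume "s \<noteq> s'"
    then have "hclique s \<inter> hclique s' = {}"
      by auto
    moreover have "hclique s \<subseteq> Collect (h_vert k)" "hclique s' \<subseteq> Collect (h_vert k)"
      using s_s' by auto
    ultimately have "\<sigma> ` hclique s \<inter> \<sigma> ` hclique s' = {}"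
      using inj_on_image_Int[OF inj] by (metis image_empty)
    then have "card (\<sigma> ` hclique s \<union> \<sigma> ` hclique s') = s + s'"
      using s_s' by (simp add: card_Un_disjoint card_image_hclique)
    moreover have "\<sigma> ` hclique s \<union> \<sigma> ` hclique s' \<subseteq> gclique (clique_block s)"
      using clique_block(2)[OF s_s'(1)] clique_block(2)[OF s_s'(2)] unfolding s_s'(3) by (rule Un_least)
    ultimately have "s + s' \<le> clique_block s"
      using card_mono[of "gclique (clique_block s)" "\<sigma> ` hclique s \<union> \<sigma> ` hclique s'"] card_gclique
      by simp
    then show False
      using clique_block(1)[OF s_s'(1)] s_s'(1,2) by simp
  qed
qed

lemma clique_block_eq:
  assumes "s \<in> {6..10}"
  shows "clique_block s = s"
proof -
  have "clique_block ` {6..10} \<subseteq> {6..10}"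
    using clique_block(1) by blast
  then show ?thesis
    using inj_on_inflationary_eq_self[OF _ inj_on_clique_block _ clique_block_ge assms] by simp
qed

lemma clique_image:
  assumes "s \<in> {6..10}"
  shows "\<sigma> ` hclique s = gclique s"
  using card_subset_eq[OF _ clique_block(2)[OF assms]] card_image_hclique[OF assms] card_gclique
  by (simp add: clique_block_eq[OF assms])

lemma GK_preimage:
  assumes "h_vert k v" "\<sigma> v = GK s x"
  shows "v \<in> hclique s"
proof -
  have s: "s \<in> {6..10}" "x < s"
    using vert[OF assms(1)] assms(2) by auto
  then have "\<sigma> v \<in> \<sigma> ` hclique s"
    unfolding clique_image[OF s(1)] assms(2) by simp
  then obtain z where z: "z < s" "\<sigma> (HK s z) = \<sigma> v"
    by auto
  then have "v = HK s z"
    using inj_onD[OF inj z(2)] assms(1) s by auto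
  with z show ?thesis
    by simp
qed

lemma kappa_fixed:
  assumes s: "s \<in> {6..10}"
  shows "\<sigma> (hkappa s) = gkappa s"
proof -
  define s' :: nat where "s' = (if s = 6 then 7 else 6)"
  have s': "s' \<in> {6..10}" "s' \<noteq> s"
    unfolding s'_def using s by auto
  have "\<sigma> (hkappa s) \<in> gclique s" "\<sigma> (hkappa s') \<in> gclique s'"
    unfolding clique_image[OF s, symmetric] clique_image[OF s'(1), symmetric] using s s' by auto
  then obtain z z' where z: "\<sigma> (hkappa s) = GK s z" and z': "\<sigma> (hkappa s') = GK s' z'"
    by blast
  have "g_adj m n Q R (\<sigma> (hkappa s)) (\<sigma> (hkappa s'))"
    using adj s s' by simp
  then show ?thesis
    using z z' s' by auto
qed

lemma kappa_neighbour_image: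
  assumes "h_vert k v" "\<forall>s x. v \<noteq> HK s x" "h_adj k v (hkappa c)"
  shows "(\<exists>S P i. \<sigma> v = GF S P i \<and> c = cidx S (endp_orient P)) \<or> (\<exists>S j X. \<sigma> v = GU S j X \<and> c = cidx S X)"
proof -
  have "c \<in> {6..10}"
    using assms(2,3) cidx_range by (cases v) auto
  then have "g_adj m n Q R (\<sigma> v) (gkappa c)"
    using adj[OF assms(3)] kappa_fixed by simp
  moreover have "\<sigma> v \<noteq> GK s x" for s x
    using GK_preimage assms(1,2) by blast
  ultimately show ?thesis
    by (cases "\<sigma> v") auto
qed

lemma endpoint_image_cases:
  "(\<exists>i. \<sigma> (HE S P) = GF S P i) \<or> (\<exists>j. \<sigma> (HE S P) = GU S j (endp_orient P))"
  using kappa_neighbour_image[of "HE S P" "cidx S (endp_orient P)"] by (auto simp: cidx_eq_iff)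

lemma triangle_image_cases:
  assumes "i \<in> {1..k}"
  shows "(\<exists>i'. \<sigma> (HT S i (endp_orient P)) = GF S P i') \<or>
    (\<exists>j. \<sigma> (HT S i (endp_orient P)) = GU S j (endp_orient P))"
  using kappa_neighbour_image[of "HT S i (endp_orient P)" "cidx S (endp_orient P)"] assms
  by (auto simp: cidx_eq_iff)

text \<open>If e_{S,P} went to a triangle vertex, then t_{S,1,P} would go to an endpoint copy
  f_{S,P,i}, which has no neighbour adjacent to kappa'_{c(S,P')} for the other endpoint label P'.\<close>

lemma endpoint_image_GF:
  assumes "k \<ge> 1"
  shows "\<exists>i\<in>{1..n}. \<sigma> (HE S P) = GF S P i"
proof -
  obtain P' where P': "P' \<noteq> P"
    using endp.exhaust by (metis endp.distinct(1))
  have one: "1 \<in> {1..k}"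
    using assms by simp
  have "\<exists>i. \<sigma> (HE S P) = GF S P i"
  proof (rule ccontr)
    assume "\<nexists>i. \<sigma> (HE S P) = GF S P i"
    then obtain j where j: "\<sigma> (HE S P) = GU S j (endp_orient P)"
      using endpoint_image_cases by blast
    have "g_adj m n Q R (\<sigma> (HE S P)) (\<sigma> (HT S 1 (endp_orient P)))"
      using adj one by simp
    then obtain i' where i': "\<sigma> (HT S 1 (endp_orient P)) = GF S P i'"
      using triangle_image_cases[OF one, of S P] j by auto
    have "g_adj m n Q R (\<sigma> (HT S 1 (endp_orient P))) (\<sigma> (HT S 1 (endp_orient P')))"
      using adj one P' by simp
    then show False
      using triangle_image_cases[OF one, of S P'] i' P' by auto
  qed
  then show ?thesis
    using vert[of "HE S P"] by auto
qed

lemma triangle_image_GU: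
  assumes "\<sigma> (HE S P) = GF S P i" "l \<in> {1..k}"
  shows "\<exists>j\<in>Q i. \<sigma> (HT S l (endp_orient P)) = GU S j (endp_orient P)"
proof -
  have "g_adj m n Q R (GF S P i) (\<sigma> (HT S l (endp_orient P)))"
    using adj[of "HE S P" "HT S l (endp_orient P)"] assms by simp
  then show ?thesis
    using triangle_image_cases[OF assms(2), of S P] by auto
qed

lemma endpoint_neighbourhoods_eq:
  assumes i: "\<sigma> (HE S PA) = GF S PA i" "finite (Q i)" "card (Q i) = k"
    and i': "\<sigma> (HE S PB) = GF S PB i'" "finite (Q i')" "card (Q i') = k"
  shows "Q i = Q i'"
proof -
  have "\<sigma> (HT S l OA) \<in> (\<lambda>j. GU S j OA) ` (Q i \<inter> Q i')" if l: "l \<in> {1..k}" for l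
  proof -
    obtain j where j: "j \<in> Q i" "\<sigma> (HT S l OA) = GU S j OA"
      using triangle_image_GU[OF i(1) l] by auto
    obtain j' where j': "j' \<in> Q i'" "\<sigma> (HT S l OB) = GU S j' OB"
      using triangle_image_GU[OF i'(1) l] by auto
    have "g_adj m n Q R (\<sigma> (HT S l OA)) (\<sigma> (HT S l OB))"
      using adj l by simp
    then have "j = j'"
      using j j' by simp
    with j j' show ?thesis
      by blast
  qed
  then have "(\<lambda>l. \<sigma> (HT S l OA)) ` {1..k} \<subseteq> (\<lambda>j. GU S j OA) ` (Q i \<inter> Q i')"
    by blast
  moreover have "inj_on (\<lambda>l. \<sigma> (HT S l OA)) {1..k}"
  proof (rule inj_onI)
    fix l l' assume "l \<in> {1..k}" "l' \<in> {1..k}" "\<sigma> (HT S l OA) = \<sigma> (HT S l' OA)"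
    then show "l = l'"
      using inj_onD[OF inj, of "HT S l OA" "HT S l' OA"] by simp
  qed
  ultimately have "k \<le> card ((\<lambda>j. GU S j OA) ` (Q i \<inter> Q i'))"
    using card_inj_on_le i(2) by (metis card_atLeastAtMost diff_Suc_1 finite_Int finite_imageI)
  also have "\<dots> \<le> card (Q i \<inter> Q i')"
    using card_image_le i(2) by blast
  finally have "card (Q i \<inter> Q i') \<ge> k" .
  then have "Q i \<inter> Q i' = Q i" "Q i \<inter> Q i' = Q i'"
    using card_subset_eq[of "Q i" "Q i \<inter> Q i'"] card_subset_eq[of "Q i'" "Q i \<inter> Q i'"]
      card_mono[of "Q i" "Q i \<inter> Q i'"] i i' by auto
  then show ?thesis
    by simp
qed

lemma common_R_pair:
  assumes "k \<ge> 1" and Q: "\<And>i. i \<in> {1..n} \<Longrightarrow> finite (Q i) \<and> card (Q i) = k" "inj_on Q {1..n}"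
  shows "\<exists>it\<in>{1..n}. \<exists>ib\<in>{1..n}. (it, ib) \<in> R PA \<and> (it, ib) \<in> R PB"
proof -
  obtain ix where ix: "\<And>S P. ix S P \<in> {1..n}" "\<And>S P. \<sigma> (HE S P) = GF S P (ix S P)"
    using endpoint_image_GF[OF assms(1)] by metis
  have same: "ix S PA = ix S PB" for S
    using endpoint_neighbourhoods_eq[OF ix(2) _ _ ix(2)] Q ix(1) by (metis inj_onD)
  have "(ix Top P, ix Bot P) \<in> R P" for P
    using adj[of "HE Top P" "HE Bot P"] ix(2) by simp
  then show ?thesis
    using ix(1) same by metis
qed

end

lemma ex_H_embedding_if_common_R_pair:
  assumes Q: "\<And>i. i \<in> {1..n} \<Longrightarrow> Q i \<subseteq> {1..m} \<and> card (Q i) = k"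
    and it: "it \<in> {1..n}" and ib: "ib \<in> {1..n}"
    and R: "(it, ib) \<in> R PA" "(it, ib) \<in> R PB"
  shows "\<exists>\<sigma>. H_embedding k m n Q R \<sigma>"
proof -
  define iS where "iS S = (if S = Top then it else ib)" for S
  have iS: "iS S \<in> {1..n}" for S
    using it ib unfolding iS_def by simp
  have "\<exists>h. bij_betw h {1..k} (Q (iS S))" for S
    using ex_bij_betw_nat_finite_1[of "Q (iS S)"] Q[OF iS] finite_subset[of "Q (iS S)" "{1..m}"] by auto
  then obtain h where h: "\<And>S. bij_betw (h S) {1..k} (Q (iS S))"
    by metis
  have hQ: "h S l \<in> Q (iS S)" if "l \<in> {1..k}" for S l
    using bij_betwE[OF h] that by blast
  have hm: "h S l \<in> {1..m}" if "l \<in> {1..k}" for S l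
    using hQ[OF that] Q[OF iS] by blast
  have h_inj: "l = l'" if "l \<in> {1..k}" "l' \<in> {1..k}" "h S l = h S l'" for S l l'
    using inj_onD[OF bij_betw_imp_inj_on[OF h] that(3,1,2)] .
  have R_iS: "(iS Top, iS Bot) \<in> R P" for P
    using R by (cases P) (simp_all add: iS_def)
  define \<sigma> where "\<sigma> v = (case v of HE S P \<Rightarrow> GF S P (iS S) | HK s x \<Rightarrow> GK s x
    | HT S i X \<Rightarrow> GU S (h S i) X)" for v
  show ?thesis
  proof (intro exI H_embedding.intro)
    show "inj_on \<sigma> (Collect (h_vert k))"
    proof (rule inj_onI)
      fix v w assume "v \<in> Collect (h_vert k)" "w \<in> Collect (h_vert k)" "\<sigma> v = \<sigma> w"
      then show "v = w"
        by (cases v; cases w) (auto simp: \<sigma>_def intro: h_inj)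
    qed
    show "g_vert m n (\<sigma> v)" if "h_vert k v" for v
      using that iS hm by (cases v) (auto simp: \<sigma>_def)
    show "g_adj m n Q R (\<sigma> v) (\<sigma> w)" if vw: "h_adj k v w" for v w
    proof (cases "\<exists>S S' P. v = HE S P \<and> w = HE S' P")
      case True
      then obtain S S' P where "v = HE S P" "w = HE S' P"
        by blast
      with vw show ?thesis
        using R_iS by (cases S; cases S') (simp_all add: \<sigma>_def)
    next
      case False
      with vw show ?thesis
        using iS hQ hm by (cases v; cases w) (auto simp: \<sigma>_def)
    qed
  qed
qed

lemma ex_H_embedding_iff_common_R_pair:
  assumes "k \<ge> 1" and Q: "\<And>i. i \<in> {1..n} \<Longrightarrow> Q i \<subseteq> {1..m} \<and> card (Q i) = k" "inj_on Q {1..n}"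
  shows "(\<exists>\<sigma>. H_embedding k m n Q R \<sigma>) \<longleftrightarrow>
    (\<exists>it\<in>{1..n}. \<exists>ib\<in>{1..n}. (it, ib) \<in> R PA \<and> (it, ib) \<in> R PB)"
proof
  assume "\<exists>\<sigma>. H_embedding k m n Q R \<sigma>"
  moreover have "finite (Q i) \<and> card (Q i) = k" if "i \<in> {1..n}" for i
    using Q(1)[OF that] finite_subset by blast
  ultimately show "\<exists>it\<in>{1..n}. \<exists>ib\<in>{1..n}. (it, ib) \<in> R PA \<and> (it, ib) \<in> R PB"
    using H_embedding.common_R_pair[OF _ assms(1) _ Q(2)] by blast
next
  assume "\<exists>it\<in>{1..n}. \<exists>ib\<in>{1..n}. (it, ib) \<in> R PA \<and> (it, ib) \<in> R PB"
  then show "\<exists>\<sigma>. H_embedding k m n Q R \<sigma>"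
    using ex_H_embedding_if_common_R_pair[where Q = Q and n = n and m = m and k = k, OF Q(1)] by blast
qed

theorem lemma1:
  fixes k n :: nat and G :: "gvert set \<times> gvert set set"
  assumes "k \<ge> 2" and "n \<ge> 1" and "G \<in> Gfam k n"
  shows "contains_subgraph G (H_graph k) \<longleftrightarrow>
    (\<exists>it \<in> {1..n}. \<exists>ib \<in> {1..n}.
       {GF Top PA it, GF Bot PA ib} \<in> snd G \<and> {GF Top PB it, GF Bot PB ib} \<in> snd G)"
proof -
  obtain Q R where G: "G = (Gverts k n, Gedges k n Q R)" and ord: "is_ordering k n Q"
    using assms(3) unfolding Gfam_def by blast
  have k: "k \<ge> 1"
    using assms(1) by simp
  have "(\<exists>\<sigma>. H_embedding k (mpar k n) n Q R \<sigma>) \<longleftrightarrow>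
    (\<exists>it\<in>{1..n}. \<exists>ib\<in>{1..n}. (it, ib) \<in> R PA \<and> (it, ib) \<in> R PB)"
    using ex_H_embedding_iff_common_R_pair[OF k is_ordering_subset_card[OF ord k assms(2)]
        is_ordering_inj_on[OF ord k assms(2)]] .
  then show ?thesis
    unfolding G contains_H_graph_iff by (simp add: Gedges_iff_g_adj)
qed

end
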